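(* Let $R,S$ be rings, $M$ an $(S,R)$-bimodule, $m_1,\dots,m_n\in M$ and $f_1,\dots,f_n\in{}^*M={}_S\mathrm{Hom}(M,S)$. Then $$m\otimes_R f=\sum_{i=1}^n m_i\otimes_R\big((?)f_i\cdot(m)f\big)\quad\text{in } M\otimes_R{}_S\mathrm{Hom}(M,Q)$$ for every left $S$-module $Q$, every $f\in{}_S\mathrm{Hom}(M,Q)$ and every $m\in M$, if and only if $$m\otimes_R \mathrm{id}_M=\sum_{i=1}^n m_i\otimes_R\big((?)f_i\, m\big)\quad\text{in } M\otimes_R{}_S\mathrm{End}(M)$$ for every $m\in M$.
   Context: Homomorphisms of left $S$-modules are written on the right of their arguments: $(m)f$. For $Q\in{}_S\mathcal{M}$, ${}_S\mathrm{Hom}(M,Q)$ is a left $R$-module via $(m)(r\cdot f)=(mr)f$, and the tensor products above are over this structure and the right $R$-structure of $M$. For $f_i\in{}^*M$ and $q\in Q$, $(?)f_i\cdot q$ (written $(?)f_i q$) denotes the left $S$-linear map $M\to Q$, $x\mapsto ((x)f_i)\,q$. *)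

theory Defs
  imports "HOL-Algebra.Module"
begin

definition lmodule :: "('s, 'a) ring_scheme \<Rightarrow> ('s, 'm) module \<Rightarrow> bool" where
  "lmodule S M \<longleftrightarrow> ring S \<and> abelian_group M \<and>
     (\<forall>a\<in>carrier S. \<forall>x\<in>carrier M. a \<odot>\<^bsub>M\<^esub> x \<in> carrier M) \<and>
     (\<forall>a\<in>carrier S. \<forall>b\<in>carrier S. \<forall>x\<in>carrier M.
        (a \<oplus>\<^bsub>S\<^esub> b) \<odot>\<^bsub>M\<^esub> x = a \<odot>\<^bsub>M\<^esub> x \<oplus>\<^bsub>M\<^esub> b \<odot>\<^bsub>M\<^esub> x) \<and>
     (\<forall>a\<in>carrier S. \<forall>x\<in>carrier M. \<forall>y\<in>carrier M.
        a \<odot>\<^bsub>M\<^esub> (x \<oplus>\<^bsub>M\<^esub> y) = a \<odot>\<^bsub>M\<^esub> x \<oplus>\<^bsub>M\<^esub> a \<odot>\<^bsub>M\<^esub> y) \<and>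
     (\<forall>a\<in>carrier S. \<forall>b\<in>carrier S. \<forall>x\<in>carrier M.
        (a \<otimes>\<^bsub>S\<^esub> b) \<odot>\<^bsub>M\<^esub> x = a \<odot>\<^bsub>M\<^esub> (b \<odot>\<^bsub>M\<^esub> x)) \<and>
     (\<forall>x\<in>carrier M. \<one>\<^bsub>S\<^esub> \<odot>\<^bsub>M\<^esub> x = x)"

definition bimodule :: "('s, 'a) ring_scheme \<Rightarrow> ('r, 'b) ring_scheme \<Rightarrow>
    ('s, 'm) module \<Rightarrow> ('m \<Rightarrow> 'r \<Rightarrow> 'm) \<Rightarrow> bool" where
  "bimodule S R M ract \<longleftrightarrow> lmodule S M \<and> ring R \<and>
     (\<forall>x\<in>carrier M. \<forall>r\<in>carrier R. ract x r \<in> carrier M) \<and>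
     (\<forall>x\<in>carrier M. \<forall>r\<in>carrier R. \<forall>r'\<in>carrier R.
        ract x (r \<oplus>\<^bsub>R\<^esub> r') = ract x r \<oplus>\<^bsub>M\<^esub> ract x r') \<and>
     (\<forall>x\<in>carrier M. \<forall>y\<in>carrier M. \<forall>r\<in>carrier R.
        ract (x \<oplus>\<^bsub>M\<^esub> y) r = ract x r \<oplus>\<^bsub>M\<^esub> ract y r) \<and>
     (\<forall>x\<in>carrier M. \<forall>r\<in>carrier R. \<forall>r'\<in>carrier R.
        ract x (r \<otimes>\<^bsub>R\<^esub> r') = ract (ract x r) r') \<and>
     (\<forall>x\<in>carrier M. ract x \<one>\<^bsub>R\<^esub> = x) \<and>
     (\<forall>s\<in>carrier S. \<forall>x\<in>carrier M. \<forall>r\<in>carrier R.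
        ract (s \<odot>\<^bsub>M\<^esub> x) r = s \<odot>\<^bsub>M\<^esub> ract x r)"

text \<open>Left S-linear maps M \<rightarrow> Q, as extensional functions on the carrier of M.
  The paper writes homomorphisms on the right, (m)f; here this is f m.\<close>

definition lhom :: "('s, 'a) ring_scheme \<Rightarrow> ('s, 'm) module \<Rightarrow> ('s, 'q) module \<Rightarrow> ('m \<Rightarrow> 'q) set" where
  "lhom S M Q = {f. f \<in> carrier M \<rightarrow>\<^sub>E carrier Q \<and>
     (\<forall>x\<in>carrier M. \<forall>y\<in>carrier M. f (x \<oplus>\<^bsub>M\<^esub> y) = f x \<oplus>\<^bsub>Q\<^esub> f y) \<and>
     (\<forall>s\<in>carrier S. \<forall>x\<in>carrier M. f (s \<odot>\<^bsub>M\<^esub> x) = s \<odot>\<^bsub>Q\<^esub> f x)}"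

definition ring_lmod :: "('s, 'a) ring_scheme \<Rightarrow> ('s, 's) module" where
  "ring_lmod S = \<lparr>carrier = carrier S, mult = mult S, one = one S,
     zero = zero S, add = add S, smult = mult S\<rparr>"

text \<open>The left R-module _S Hom(M,Q), with (m)(r f) = (m r) f.  Only the additive
  group and the R-action are relevant (the mult/one fields are unused).\<close>

definition hom_module :: "('s, 'a) ring_scheme \<Rightarrow> ('s, 'm) module \<Rightarrow> ('m \<Rightarrow> 'r \<Rightarrow> 'm) \<Rightarrow>
    ('s, 'q) module \<Rightarrow> ('r, 'm \<Rightarrow> 'q) module" where
  "hom_module S M ract Q = \<lparr>carrier = lhom S M Q,
     mult = (\<lambda>f g. \<lambda>x\<in>carrier M. undefined), one = (\<lambda>x\<in>carrier M. undefined),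
     zero = (\<lambda>x\<in>carrier M. \<zero>\<^bsub>Q\<^esub>),
     add = (\<lambda>f g. \<lambda>x\<in>carrier M. f x \<oplus>\<^bsub>Q\<^esub> g x),
     smult = (\<lambda>r f. \<lambda>x\<in>carrier M. f (ract x r))\<rparr>"

text \<open>M \<otimes>_R N (M a right R-module via ract, N a left R-module) is the free abelian
  group on carrier M \<times> carrier N (finitely supported integer-valued functions)
  modulo the subgroup generated by the bilinearity and balancing relations.
  A finite sum of pure tensors \<Sum> m_i \<otimes> n_i is represented by the list of pairs.\<close>

definition freeab :: "('m \<times> 'n) list \<Rightarrow> ('m \<times> 'n \<Rightarrow> int)" where
  "freeab xs = (\<lambda>p. int (count_list xs p))"

inductive_set tensor_rel :: "('r, 'a) ring_scheme \<Rightarrow> ('m, 'b) ring_scheme \<Rightarrow> ('m \<Rightarrow> 'r \<Rightarrow> 'm) \<Rightarrow>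
    ('r, 'n) module \<Rightarrow> ('m \<times> 'n \<Rightarrow> int) set"
  for R M ract N where
  zero: "(\<lambda>_. 0) \<in> tensor_rel R M ract N"
| add: "x \<in> tensor_rel R M ract N \<Longrightarrow> y \<in> tensor_rel R M ract N \<Longrightarrow> (\<lambda>p. x p + y p) \<in> tensor_rel R M ract N"
| neg: "x \<in> tensor_rel R M ract N \<Longrightarrow> (\<lambda>p. - x p) \<in> tensor_rel R M ract N"
| ladd: "m \<in> carrier M \<Longrightarrow> m' \<in> carrier M \<Longrightarrow> y \<in> carrier N \<Longrightarrow>
     (\<lambda>p. freeab [(m \<oplus>\<^bsub>M\<^esub> m', y)] p - freeab [(m, y)] p - freeab [(m', y)] p) \<in> tensor_rel R M ract N"
| radd: "m \<in> carrier M \<Longrightarrow> y \<in> carrier N \<Longrightarrow> y' \<in> carrier N \<Longrightarrow>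
     (\<lambda>p. freeab [(m, y \<oplus>\<^bsub>N\<^esub> y')] p - freeab [(m, y)] p - freeab [(m, y')] p) \<in> tensor_rel R M ract N"
| bal: "m \<in> carrier M \<Longrightarrow> y \<in> carrier N \<Longrightarrow> r \<in> carrier R \<Longrightarrow>
     (\<lambda>p. freeab [(ract m r, y)] p - freeab [(m, r \<odot>\<^bsub>N\<^esub> y)] p) \<in> tensor_rel R M ract N"

definition tensor_eq :: "('r, 'a) ring_scheme \<Rightarrow> ('m, 'b) ring_scheme \<Rightarrow> ('m \<Rightarrow> 'r \<Rightarrow> 'm) \<Rightarrow>
    ('r, 'n) module \<Rightarrow> ('m \<times> 'n) list \<Rightarrow> ('m \<times> 'n) list \<Rightarrow> bool" where
  "tensor_eq R M ract N xs ys \<longleftrightarrow>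
     set xs \<subseteq> carrier M \<times> carrier N \<and> set ys \<subseteq> carrier M \<times> carrier N \<and>
     (\<lambda>p. freeab xs p - freeab ys p) \<in> tensor_rel R M ract N"

definition dual_times :: "('s, 'm) module \<Rightarrow> ('s, 'q) module \<Rightarrow> ('m \<Rightarrow> 's) \<Rightarrow> 'q \<Rightarrow> ('m \<Rightarrow> 'q)" where
  "dual_times M Q g q = (\<lambda>x\<in>carrier M. g x \<odot>\<^bsub>Q\<^esub> q)"

definition cond_Q :: "('s, 'a) ring_scheme \<Rightarrow> ('r, 'b) ring_scheme \<Rightarrow> ('s, 'm) module \<Rightarrow>
    ('m \<Rightarrow> 'r \<Rightarrow> 'm) \<Rightarrow> nat \<Rightarrow> (nat \<Rightarrow> 'm) \<Rightarrow> (nat \<Rightarrow> 'm \<Rightarrow> 's) \<Rightarrow>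
    ('s, 'q) module \<Rightarrow> ('m \<Rightarrow> 'q) \<Rightarrow> 'm \<Rightarrow> bool" where
  "cond_Q S R M ract n ms fs Q f m \<longleftrightarrow>
     tensor_eq R M ract (hom_module S M ract Q) [(m, f)]
       (map (\<lambda>i. (ms i, dual_times M Q (fs i) (f m))) [0..<n])"

definition cond_End :: "('s, 'a) ring_scheme \<Rightarrow> ('r, 'b) ring_scheme \<Rightarrow> ('s, 'm) module \<Rightarrow>
    ('m \<Rightarrow> 'r \<Rightarrow> 'm) \<Rightarrow> nat \<Rightarrow> (nat \<Rightarrow> 'm) \<Rightarrow> (nat \<Rightarrow> 'm \<Rightarrow> 's) \<Rightarrow> 'm \<Rightarrow> bool" where
  "cond_End S R M ract n ms fs m \<longleftrightarrow>
     tensor_eq R M ract (hom_module S M ract M) [(m, \<lambda>x\<in>carrier M. x)]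
       (map (\<lambda>i. (ms i, dual_times M M (fs i) m)) [0..<n])"

end

theory Submission
  imports Defs "HOL-Library.Multiset"
begin

text \<open>Specialising the first condition to Q = M and f = id gives the second.  Conversely,
  post-composition with f \<in> Hom(M,Q) is an R-linear map End(M) \<rightarrow> Hom(M,Q) sending id
  to f and (?)f_i m to (?)f_i (m)f, so applying M \<otimes>_R - to it carries the second
  equation to the first.\<close>

definition freeab_diff :: "('m \<times> 'n) list \<Rightarrow> ('m \<times> 'n) list \<Rightarrow> ('m \<times> 'n \<Rightarrow> int)" where
  "freeab_diff A B = (\<lambda>p. freeab A p - freeab B p)"

lemma freeab_diff_eq_iff:
  "freeab_diff A B = freeab_diff A' B' \<longleftrightarrow> mset (A @ B') = mset (A' @ B)"
proof -
  have "freeab_diff A B = freeab_diff A' B' \<longleftrightarrow>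
      (\<forall>p. count_list A p + count_list B' p = count_list A' p + count_list B p)"
  proof -
    have "\<And>p. int (count_list A p) - int (count_list B p) = int (count_list A' p) - int (count_list B' p)
        \<longleftrightarrow> count_list A p + count_list B' p = count_list A' p + count_list B p"
      by linarith
    then show ?thesis unfolding freeab_diff_def freeab_def fun_eq_iff by presburger
  qed
  also have "\<dots> \<longleftrightarrow> mset (A @ B') = mset (A' @ B)"
    unfolding multiset_eq_iff by (simp add: count_mset)
  finally show ?thesis .
qed

lemma freeab_diff_map_cong:
  "freeab_diff A B = freeab_diff A' B' \<Longrightarrow>
    freeab_diff (map g A) (map g B) = freeab_diff (map g A') (map g B')"
  unfolding freeab_diff_eq_iff by (metis map_append mset_map)

lemma freeab_diff_append:
  "freeab_diff (A1 @ A2) (B1 @ B2) = (\<lambda>p. freeab_diff A1 B1 p + freeab_diff A2 B2 p)"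
  unfolding freeab_diff_def freeab_def by (auto simp: fun_eq_iff)

lemma freeab_diff_swap: "freeab_diff B A = (\<lambda>p. - freeab_diff A B p)"
  unfolding freeab_diff_def by simp

lemma freeab_diff_Nil: "freeab_diff [] [] = (\<lambda>_. 0)"
  unfolding freeab_diff_def freeab_def by simp

lemma freeab_diff_single_pair:
  "freeab_diff [a] [b, c] = (\<lambda>p. freeab [a] p - freeab [b] p - freeab [c] p)"
  unfolding freeab_diff_def freeab_def by (simp add: fun_eq_iff)

lemma tensor_rel_freeab_diff:
  "x \<in> tensor_rel R M ract N \<Longrightarrow> \<exists>A B. x = freeab_diff A B"
proof (induction rule: tensor_rel.induct)
  case zero
  show ?case by (intro exI) (rule freeab_diff_Nil[symmetric])
next
  case (add x y)
  then obtain A1 B1 A2 B2 where "x = freeab_diff A1 B1" "y = freeab_diff A2 B2" by blast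
  then show ?case by (intro exI) (simp only: freeab_diff_append[symmetric])
next
  case (neg x)
  then obtain A B where "x = freeab_diff A B" by blast
  then show ?case by (intro exI) (simp only: freeab_diff_swap[symmetric])
qed (intro exI, rule freeab_diff_single_pair[symmetric] freeab_diff_def[symmetric])+

lemma tensor_rel_map_right:
  assumes rel: "freeab_diff A B \<in> tensor_rel R M ract N"
    and closed: "\<And>y. y \<in> carrier N \<Longrightarrow> \<phi> y \<in> carrier N'"
    and additive: "\<And>y y'. y \<in> carrier N \<Longrightarrow> y' \<in> carrier N \<Longrightarrow>
      \<phi> (y \<oplus>\<^bsub>N\<^esub> y') = \<phi> y \<oplus>\<^bsub>N'\<^esub> \<phi> y'"
    and linear: "\<And>r y. r \<in> carrier R \<Longrightarrow> y \<in> carrier N \<Longrightarrow>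
      \<phi> (r \<odot>\<^bsub>N\<^esub> y) = r \<odot>\<^bsub>N'\<^esub> \<phi> y"
  shows "freeab_diff (map (apsnd \<phi>) A) (map (apsnd \<phi>) B) \<in> tensor_rel R M ract N'"
proof -
  \<comment> \<open>The map acts on representing lists, not on elements of the free group, so the
    induction proves the claim for every representative of x at once.\<close>
  let ?image = "\<lambda>A B. freeab_diff (map (apsnd \<phi>) A) (map (apsnd \<phi>) B)"
  have by_representative: "\<forall>A B. x = freeab_diff A B \<longrightarrow> ?image A B \<in> tensor_rel R M ract N'"
    if "x = freeab_diff A0 B0" "?image A0 B0 \<in> tensor_rel R M ract N'" for x A0 B0
  proof (intro allI impI)
    fix A B assume "x = freeab_diff A B"
    then have "?image A B = ?image A0 B0"
      using that(1) by (intro freeab_diff_map_cong) simp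
    with that(2) show "?image A B \<in> tensor_rel R M ract N'" by simp
  qed
  have "\<forall>A B. x = freeab_diff A B \<longrightarrow> ?image A B \<in> tensor_rel R M ract N'"
    if "x \<in> tensor_rel R M ract N" for x
    using that
  proof (induction rule: tensor_rel.induct)
    case zero
    have "?image [] [] \<in> tensor_rel R M ract N'"
      using tensor_rel.zero by (simp add: freeab_diff_Nil)
    with freeab_diff_Nil[symmetric] show ?case by (rule by_representative)
  next
    case (add x y)
    obtain A1 B1 A2 B2 where x: "x = freeab_diff A1 B1" and y: "y = freeab_diff A2 B2"
      using add.hyps tensor_rel_freeab_diff by metis
    have "?image (A1 @ A2) (B1 @ B2) \<in> tensor_rel R M ract N'"
      unfolding map_append freeab_diff_append using add.IH x y by (intro tensor_rel.add) simp_all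
    with freeab_diff_append[symmetric] show ?case
      unfolding x y by (rule by_representative)
  next
    case (neg x)
    obtain A1 B1 where x: "x = freeab_diff A1 B1"
      using neg.hyps tensor_rel_freeab_diff by metis
    have "?image B1 A1 \<in> tensor_rel R M ract N'"
      unfolding freeab_diff_swap[of "map (apsnd \<phi>) B1"] using neg.IH x by (intro tensor_rel.neg) simp
    with freeab_diff_swap[symmetric] show ?case
      unfolding x by (rule by_representative)
  next
    case (ladd m m' y)
    then show ?case
      using closed tensor_rel.ladd[of m M m' "\<phi> y" N' R ract]
      by (intro by_representative[of _ "[(m \<oplus>\<^bsub>M\<^esub> m', y)]" "[(m, y), (m', y)]"])
        (simp_all add: freeab_diff_single_pair)
  next
    case (radd m y y')
    then show ?case
      using closed additive tensor_rel.radd[of m M "\<phi> y" N' "\<phi> y'" R ract]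
      by (intro by_representative[of _ "[(m, y \<oplus>\<^bsub>N\<^esub> y')]" "[(m, y), (m, y')]"])
        (simp_all add: freeab_diff_single_pair)
  next
    case (bal m y r)
    then show ?case
      using closed linear tensor_rel.bal[of m M "\<phi> y" N' r R ract]
      by (intro by_representative[of _ "[(ract m r, y)]" "[(m, r \<odot>\<^bsub>N\<^esub> y)]"])
        (simp_all add: freeab_diff_def)
  qed
  with rel show ?thesis by blast
qed

lemma tensor_eq_map_right:
  assumes eq: "tensor_eq R M ract N xs ys"
    and closed: "\<And>y. y \<in> carrier N \<Longrightarrow> \<phi> y \<in> carrier N'"
    and additive: "\<And>y y'. y \<in> carrier N \<Longrightarrow> y' \<in> carrier N \<Longrightarrow>
      \<phi> (y \<oplus>\<^bsub>N\<^esub> y') = \<phi> y \<oplus>\<^bsub>N'\<^esub> \<phi> y'"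
    and linear: "\<And>r y. r \<in> carrier R \<Longrightarrow> y \<in> carrier N \<Longrightarrow>
      \<phi> (r \<odot>\<^bsub>N\<^esub> y) = r \<odot>\<^bsub>N'\<^esub> \<phi> y"
  shows "tensor_eq R M ract N' (map (apsnd \<phi>) xs) (map (apsnd \<phi>) ys)"
proof -
  have "freeab_diff xs ys \<in> tensor_rel R M ract N"
    using eq by (simp add: tensor_eq_def freeab_diff_def)
  then have "freeab_diff (map (apsnd \<phi>) xs) (map (apsnd \<phi>) ys) \<in> tensor_rel R M ract N'"
    using closed additive linear by (rule tensor_rel_map_right)
  moreover have "set (map (apsnd \<phi>) zs) \<subseteq> carrier M \<times> carrier N'"
    if "set zs \<subseteq> carrier M \<times> carrier N" for zs
    using that closed by auto
  ultimately show ?thesis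
    using eq by (simp add: tensor_eq_def freeab_diff_def)
qed

definition postcomp :: "('s, 'm) module \<Rightarrow> ('p \<Rightarrow> 'q) \<Rightarrow> ('m \<Rightarrow> 'p) \<Rightarrow> ('m \<Rightarrow> 'q)" where
  "postcomp M f g = (\<lambda>x\<in>carrier M. f (g x))"

lemma carrier_hom_module [simp]: "carrier (hom_module S M ract Q) = lhom S M Q"
  by (simp add: hom_module_def)

lemma bimodule_lmodule: "bimodule S R M ract \<Longrightarrow> lmodule S M"
  by (simp add: bimodule_def)

lemma lhom_closed: "f \<in> lhom S M Q \<Longrightarrow> x \<in> carrier M \<Longrightarrow> f x \<in> carrier Q"
  unfolding lhom_def by auto

lemma lhom_id: "lmodule S M \<Longrightarrow> (\<lambda>x\<in>carrier M. x) \<in> lhom S M M"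
  unfolding lhom_def lmodule_def by (auto intro: abelian_monoid.a_closed abelian_group.axioms(1))

lemma postcomp_lhom:
  assumes "lmodule S M" "f \<in> lhom S P Q" "g \<in> lhom S M P"
  shows "postcomp M f g \<in> lhom S M Q"
proof -
  have "x \<oplus>\<^bsub>M\<^esub> y \<in> carrier M" if "x \<in> carrier M" "y \<in> carrier M" for x y
    using assms(1) that unfolding lmodule_def by (auto intro: abelian_monoid.a_closed abelian_group.axioms(1))
  moreover have "s \<odot>\<^bsub>M\<^esub> x \<in> carrier M" if "s \<in> carrier S" "x \<in> carrier M" for s x
    using assms(1) that unfolding lmodule_def by auto
  ultimately show ?thesis
    using assms(2,3) lhom_closed[OF assms(3)] unfolding lhom_def postcomp_def by auto
qed

lemma postcomp_add:
  assumes "f \<in> lhom S P Q" "g \<in> lhom S M P" "g' \<in> lhom S M P"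
  shows "postcomp M f (g \<oplus>\<^bsub>hom_module S M ract P\<^esub> g')
    = postcomp M f g \<oplus>\<^bsub>hom_module S M ract Q\<^esub> postcomp M f g'"
  using assms lhom_closed[OF assms(2)] lhom_closed[OF assms(3)]
  unfolding lhom_def postcomp_def hom_module_def by (auto simp: fun_eq_iff)

lemma postcomp_smult:
  assumes "bimodule S R M ract" "r \<in> carrier R"
  shows "postcomp M f (r \<odot>\<^bsub>hom_module S M ract P\<^esub> g) = r \<odot>\<^bsub>hom_module S M ract Q\<^esub> postcomp M f g"
  using assms unfolding bimodule_def postcomp_def hom_module_def by (auto simp: fun_eq_iff)

lemma postcomp_id:
  assumes "f \<in> lhom S M Q"
  shows "postcomp M f (\<lambda>x\<in>carrier M. x) = f"
  using assms unfolding lhom_def postcomp_def by (auto simp: fun_eq_iff PiE_def extensional_def)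

lemma postcomp_dual_times:
  assumes "f \<in> lhom S P Q" "g \<in> carrier M \<rightarrow> carrier S" "p \<in> carrier P"
  shows "postcomp M f (dual_times M P g p) = dual_times M Q g (f p)"
  using assms unfolding lhom_def postcomp_def dual_times_def by (auto simp: fun_eq_iff)

theorem lemma3p7:
  fixes R :: "'r ring" and S :: "'s ring" and M :: "('s, 'm) module"
    and ract :: "'m \<Rightarrow> 'r \<Rightarrow> 'm"
    and n :: nat and ms :: "nat \<Rightarrow> 'm" and fs :: "nat \<Rightarrow> 'm \<Rightarrow> 's"
  assumes "ring R" and "ring S" and "bimodule S R M ract"
    and "\<And>i. i < n \<Longrightarrow> ms i \<in> carrier M"
    and "\<And>i. i < n \<Longrightarrow> fs i \<in> lhom S M (ring_lmod S)"
  shows "((\<forall>(Q :: ('s, 'm) module) f m. lmodule S Q \<longrightarrow> f \<in> lhom S M Q \<longrightarrow> m \<in> carrier M \<longrightarrow>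
              cond_Q S R M ract n ms fs Q f m)
            \<longrightarrow> (\<forall>m\<in>carrier M. cond_End S R M ract n ms fs m))
       \<and> ((\<forall>m\<in>carrier M. cond_End S R M ract n ms fs m)
            \<longrightarrow> (\<forall>(Q :: ('s, 'q) module) f m. lmodule S Q \<longrightarrow> f \<in> lhom S M Q \<longrightarrow> m \<in> carrier M \<longrightarrow>
              cond_Q S R M ract n ms fs Q f m))"
proof (intro conjI impI ballI allI)
  fix m
  assume "\<forall>(Q :: ('s, 'm) module) f m. lmodule S Q \<longrightarrow> f \<in> lhom S M Q \<longrightarrow> m \<in> carrier M \<longrightarrow>
      cond_Q S R M ract n ms fs Q f m"
    and m: "m \<in> carrier M"
  then have "cond_Q S R M ract n ms fs M (\<lambda>x\<in>carrier M. x) m"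
    using bimodule_lmodule[OF assms(3)] lhom_id by blast
  with m show "cond_End S R M ract n ms fs m"
    by (simp add: cond_Q_def cond_End_def)
next
  have fs_funcset: "fs i \<in> carrier M \<rightarrow> carrier S" if "i < n" for i
    using assms(5)[OF that] by (auto simp: lhom_def ring_lmod_def)
  fix Q :: "('s, 'q) module" and f m
  assume "\<forall>m\<in>carrier M. cond_End S R M ract n ms fs m"
    and f: "f \<in> lhom S M Q" and m: "m \<in> carrier M"
  then have "tensor_eq R M ract (hom_module S M ract M) [(m, \<lambda>x\<in>carrier M. x)]
      (map (\<lambda>i. (ms i, dual_times M M (fs i) m)) [0..<n])"
    by (simp add: cond_End_def)
  then have "tensor_eq R M ract (hom_module S M ract Q)
      (map (apsnd (postcomp M f)) [(m, \<lambda>x\<in>carrier M. x)])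
      (map (apsnd (postcomp M f)) (map (\<lambda>i. (ms i, dual_times M M (fs i) m)) [0..<n]))"
    by (rule tensor_eq_map_right)
      (simp_all add: postcomp_lhom[OF bimodule_lmodule[OF assms(3)] f] postcomp_add[OF f]
        postcomp_smult[OF assms(3)])
  moreover have "map (apsnd (postcomp M f)) [(m, \<lambda>x\<in>carrier M. x)] = [(m, f)]"
    by (simp add: postcomp_id[OF f])
  moreover have "map (apsnd (postcomp M f)) (map (\<lambda>i. (ms i, dual_times M M (fs i) m)) [0..<n])
      = map (\<lambda>i. (ms i, dual_times M Q (fs i) (f m))) [0..<n]"
    by (auto intro: map_cong simp: postcomp_dual_times[OF f fs_funcset m])
  ultimately show "cond_Q S R M ract n ms fs Q f m"
    unfolding cond_Q_def by (simp only:)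
qed

end
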